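(* Let $\mathcal{D}$ be a category. For every pseudo-functorial factorization in $\mathcal{D}$ there exists a functorial factorization in $\mathcal{D}$ naturally isomorphic to it (as functors $\mathcal{D}^{\Delta^1}\to\mathcal{D}^{\Delta^2}$).
   Context: $\Delta^n$ is the linear poset $\{0,\dots,n\}$ viewed as a category with a unique morphism $i\to j$ for $i\le j$. The composition functor $\circ:\mathcal{D}^{\Delta^2}\to\mathcal{D}^{\Delta^1}$ is restriction along $\Delta^1\cong\Delta^{\{0,2\}}\hookrightarrow\Delta^2$. A functorial factorization in $\mathcal{D}$ is a functor $s:\mathcal{D}^{\Delta^1}\to\mathcal{D}^{\Delta^2}$ with $\circ\, s=\mathrm{id}$ (a strict section). A pseudo-functorial factorization is a functor $s:\mathcal{D}^{\Delta^1}\to\mathcal{D}^{\Delta^2}$ together with a natural isomorphism $\circ\, s\cong\mathrm{id}_{\mathcal{D}^{\Delta^1}}$. *)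

theory Defs
  imports Main
begin

record ('o, 'm) category =
  Ob   :: "'o set"
  Ar   :: "'m set"
  Dom  :: "'m \<Rightarrow> 'o"
  Cod  :: "'m \<Rightarrow> 'o"
  Id   :: "'o \<Rightarrow> 'm"
  Comp :: "'m \<Rightarrow> 'm \<Rightarrow> 'm"   (* Comp C g f = g \<circ> f *)

definition hom :: "('o, 'm) category \<Rightarrow> 'o \<Rightarrow> 'o \<Rightarrow> 'm set" where
  "hom C a b = {f \<in> Ar C. Dom C f = a \<and> Cod C f = b}"

definition category :: "('o, 'm) category \<Rightarrow> bool" where
  "category C \<longleftrightarrow>
     (\<forall>f\<in>Ar C. Dom C f \<in> Ob C \<and> Cod C f \<in> Ob C) \<and>
     (\<forall>a\<in>Ob C. Id C a \<in> hom C a a) \<and>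
     (\<forall>f\<in>Ar C. \<forall>g\<in>Ar C. Cod C f = Dom C g \<longrightarrow>
         Comp C g f \<in> hom C (Dom C f) (Cod C g)) \<and>
     (\<forall>f\<in>Ar C. Comp C (Id C (Cod C f)) f = f \<and> Comp C f (Id C (Dom C f)) = f) \<and>
     (\<forall>f\<in>Ar C. \<forall>g\<in>Ar C. \<forall>h\<in>Ar C. Cod C f = Dom C g \<longrightarrow> Cod C g = Dom C h \<longrightarrow>
         Comp C h (Comp C g f) = Comp C (Comp C h g) f)"

definition is_iso :: "('o, 'm) category \<Rightarrow> 'm \<Rightarrow> bool" where
  "is_iso C f \<longleftrightarrow> f \<in> Ar C \<and>
     (\<exists>g \<in> hom C (Cod C f) (Dom C f).
        Comp C g f = Id C (Dom C f) \<and> Comp C f g = Id C (Cod C f))"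

definition is_functor ::
  "('a, 'b) category \<Rightarrow> ('c, 'd) category \<Rightarrow> ('a \<Rightarrow> 'c) \<Rightarrow> ('b \<Rightarrow> 'd) \<Rightarrow> bool" where
  "is_functor C D Fo Fa \<longleftrightarrow>
     (\<forall>a\<in>Ob C. Fo a \<in> Ob D) \<and>
     (\<forall>f\<in>Ar C. Fa f \<in> hom D (Fo (Dom C f)) (Fo (Cod C f))) \<and>
     (\<forall>a\<in>Ob C. Fa (Id C a) = Id D (Fo a)) \<and>
     (\<forall>f\<in>Ar C. \<forall>g\<in>Ar C. Cod C f = Dom C g \<longrightarrow> Fa (Comp C g f) = Comp D (Fa g) (Fa f))"

definition nat_iso ::
  "('a, 'b) category \<Rightarrow> ('c, 'd) category \<Rightarrow> ('a \<Rightarrow> 'c) \<Rightarrow> ('b \<Rightarrow> 'd)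
     \<Rightarrow> ('a \<Rightarrow> 'c) \<Rightarrow> ('b \<Rightarrow> 'd) \<Rightarrow> ('a \<Rightarrow> 'd) \<Rightarrow> bool" where
  "nat_iso C D Fo Fa Go Ga eta \<longleftrightarrow>
     is_functor C D Fo Fa \<and> is_functor C D Go Ga \<and>
     (\<forall>a\<in>Ob C. eta a \<in> hom D (Fo a) (Go a) \<and> is_iso D (eta a)) \<and>
     (\<forall>f\<in>Ar C. Comp D (eta (Cod C f)) (Fa f) = Comp D (Ga f) (eta (Dom C f)))"

text \<open>A functor Delta^n -> D is given by the images F i j of the unique arrows i -> j
  (i \<le> j \<le> n); F i j = undefined outside this range (extensionality).\<close>

definition vtx :: "('o, 'm) category \<Rightarrow> (nat \<Rightarrow> nat \<Rightarrow> 'm) \<Rightarrow> nat \<Rightarrow> 'o" where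
  "vtx D F i = Dom D (F i i)"

definition diagram :: "('o, 'm) category \<Rightarrow> nat \<Rightarrow> (nat \<Rightarrow> nat \<Rightarrow> 'm) \<Rightarrow> bool" where
  "diagram D n F \<longleftrightarrow>
     (\<forall>i j. i \<le> j \<and> j \<le> n \<longrightarrow> F i j \<in> hom D (vtx D F i) (vtx D F j)) \<and>
     (\<forall>i j. \<not> (i \<le> j \<and> j \<le> n) \<longrightarrow> F i j = undefined) \<and>
     (\<forall>i. i \<le> n \<longrightarrow> vtx D F i \<in> Ob D \<and> F i i = Id D (vtx D F i)) \<and>
     (\<forall>i j k. i \<le> j \<and> j \<le> k \<and> k \<le> n \<longrightarrow> F i k = Comp D (F j k) (F i j))"

type_synonym 'm diag = "nat \<Rightarrow> nat \<Rightarrow> 'm"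
type_synonym 'm diag_arr = "'m diag \<times> 'm diag \<times> (nat \<Rightarrow> 'm)"

definition diag_arr :: "('o, 'm) category \<Rightarrow> nat \<Rightarrow> 'm diag_arr \<Rightarrow> bool" where
  "diag_arr D n x \<longleftrightarrow> (case x of (F, G, \<alpha>) \<Rightarrow>
     diagram D n F \<and> diagram D n G \<and>
     (\<forall>i. i \<le> n \<longrightarrow> \<alpha> i \<in> hom D (vtx D F i) (vtx D G i)) \<and>
     (\<forall>i. n < i \<longrightarrow> \<alpha> i = undefined) \<and>
     (\<forall>i j. i \<le> j \<and> j \<le> n \<longrightarrow> Comp D (\<alpha> j) (F i j) = Comp D (G i j) (\<alpha> i)))"

definition fun_cat :: "('o, 'm) category \<Rightarrow> nat \<Rightarrow> ('m diag, 'm diag_arr) category" where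
  "fun_cat D n = \<lparr>
     Ob = {F. diagram D n F},
     Ar = {x. diag_arr D n x},
     Dom = (\<lambda>(F, G, \<alpha>). F),
     Cod = (\<lambda>(F, G, \<alpha>). G),
     Id = (\<lambda>F. (F, F, \<lambda>i. if i \<le> n then Id D (vtx D F i) else undefined)),
     Comp = (\<lambda>(G, H, \<beta>) (F, G', \<alpha>).
               (F, H, \<lambda>i. if i \<le> n then Comp D (\<beta> i) (\<alpha> i) else undefined)) \<rparr>"

text \<open>Restriction along Delta^1 = Delta^{0,2} \<subseteq> Delta^2 (0 |-> 0, 1 |-> 2).\<close>
definition restr_ob :: "'m diag \<Rightarrow> 'm diag" where
  "restr_ob F = (\<lambda>i j. if i \<le> j \<and> j \<le> 1 then F (2 * i) (2 * j) else undefined)"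

definition restr_ar :: "'m diag_arr \<Rightarrow> 'm diag_arr" where
  "restr_ar x = (case x of (F, G, \<alpha>) \<Rightarrow>
     (restr_ob F, restr_ob G, \<lambda>i. if i \<le> 1 then \<alpha> (2 * i) else undefined))"

definition functorial_factorization ::
  "('o, 'm) category \<Rightarrow> ('m diag \<Rightarrow> 'm diag) \<Rightarrow> ('m diag_arr \<Rightarrow> 'm diag_arr) \<Rightarrow> bool" where
  "functorial_factorization D so sa \<longleftrightarrow>
     is_functor (fun_cat D 1) (fun_cat D 2) so sa \<and>
     (\<forall>X \<in> Ob (fun_cat D 1). restr_ob (so X) = X) \<and>
     (\<forall>f \<in> Ar (fun_cat D 1). restr_ar (sa f) = f)"

definition pseudo_functorial_factorization ::
  "('o, 'm) category \<Rightarrow> ('m diag \<Rightarrow> 'm diag) \<Rightarrow> ('m diag_arr \<Rightarrow> 'm diag_arr) \<Rightarrow> bool" where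
  "pseudo_functorial_factorization D so sa \<longleftrightarrow>
     is_functor (fun_cat D 1) (fun_cat D 2) so sa \<and>
     (\<exists>\<theta>. nat_iso (fun_cat D 1) (fun_cat D 1)
              (restr_ob \<circ> so) (restr_ar \<circ> sa) (\<lambda>X. X) (\<lambda>f. f) \<theta>)"

end

theory Submission
  imports Defs
begin

(* Let theta : restr o s ~= id be the given isomorphism. For X = (x0 -> x1), s X is a factorization
   a0 -> a1 -> a2, and theta_X consists of isomorphisms theta0 : a0 -> x0 and theta1 : a2 -> x1
   with theta1 o s02 = X o theta0. Conjugating s X by theta0 at vertex 0, the identity at vertex 1
   and theta1 at vertex 2 gives a factorization t X = (x0 -> a1 -> x1) of X itself, isomorphic to
   s X in D^(Delta^2). Transporting the functor s along these objectwise isomorphisms makes t a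
   functor naturally isomorphic to s; on an arrow of D^(Delta^1) the end components of t are
   theta o sigma o theta^-1, which naturality of theta identifies with the original components,
   so restr o t = id holds strictly. *)

definition iso_inv :: "('o, 'm) category \<Rightarrow> 'm \<Rightarrow> 'm" where
  "iso_inv C f = (SOME g. g \<in> hom C (Cod C f) (Dom C f) \<and>
     Comp C g f = Id C (Dom C f) \<and> Comp C f g = Id C (Cod C f))"

lemma iso_inv:
  assumes "is_iso C f" "f \<in> hom C a b"
  shows iso_inv_in_hom: "iso_inv C f \<in> hom C b a"
    and comp_iso_inv_left: "Comp C (iso_inv C f) f = Id C a"
    and comp_iso_inv_right: "Comp C f (iso_inv C f) = Id C b"
proof -
  have "\<exists>g. g \<in> hom C (Cod C f) (Dom C f) \<and> Comp C g f = Id C (Dom C f) \<and> Comp C f g = Id C (Cod C f)"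
    using assms(1) unfolding is_iso_def by blast
  from someI_ex[OF this] assms(2)
  show "iso_inv C f \<in> hom C b a" "Comp C (iso_inv C f) f = Id C a" "Comp C f (iso_inv C f) = Id C b"
    unfolding iso_inv_def hom_def by auto
qed

lemma iso_inv_is_iso: "is_iso C f \<Longrightarrow> f \<in> hom C a b \<Longrightarrow> is_iso C (iso_inv C f)"
  using iso_inv[of C f a b] unfolding is_iso_def hom_def by (auto intro!: bexI[where x=f])

definition conjugate :: "('o, 'm) category \<Rightarrow> 'm \<Rightarrow> 'm \<Rightarrow> 'm \<Rightarrow> 'm" where
  "conjugate C v u f = Comp C v (Comp C f (iso_inv C u))"

locale cat =
  fixes C :: "('o, 'm) category"
  assumes category: "category C"
begin

lemma hom_objects: "f \<in> hom C a b \<Longrightarrow> a \<in> Ob C \<and> b \<in> Ob C"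
  using category unfolding category_def hom_def by auto

lemma comp_in_hom: "f \<in> hom C a b \<Longrightarrow> g \<in> hom C b c \<Longrightarrow> Comp C g f \<in> hom C a c"
  using category unfolding category_def hom_def by auto

lemma id_in_hom: "a \<in> Ob C \<Longrightarrow> Id C a \<in> hom C a a"
  using category unfolding category_def by auto

lemma comp_id_left: "f \<in> hom C a b \<Longrightarrow> Comp C (Id C b) f = f"
  using category unfolding category_def hom_def by auto

lemma comp_id_right: "f \<in> hom C a b \<Longrightarrow> Comp C f (Id C a) = f"
  using category unfolding category_def hom_def by auto

lemma comp_assoc:
  "f \<in> hom C a b \<Longrightarrow> g \<in> hom C b c \<Longrightarrow> h \<in> hom C c d \<Longrightarrow>
   Comp C h (Comp C g f) = Comp C (Comp C h g) f"
  using category unfolding category_def hom_def by auto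

lemma id_is_iso: "a \<in> Ob C \<Longrightarrow> is_iso C (Id C a)"
  using id_in_hom[of a] comp_id_left[OF id_in_hom[of a]] unfolding is_iso_def hom_def by auto

lemma iso_inv_unique:
  assumes "is_iso C f" "f \<in> hom C a b" "g \<in> hom C b a" "Comp C g f = Id C a"
  shows "iso_inv C f = g"
proof -
  have "iso_inv C f = Comp C (Comp C g f) (iso_inv C f)"
    using assms(4) comp_id_left[OF iso_inv_in_hom[OF assms(1,2)]] by simp
  also have "\<dots> = Comp C g (Comp C f (iso_inv C f))"
    using comp_assoc[OF iso_inv_in_hom[OF assms(1,2)] assms(2,3)] by simp
  also have "\<dots> = g"
    using comp_iso_inv_right[OF assms(1,2)] comp_id_right[OF assms(3)] by simp
  finally show ?thesis .
qed

lemma conjugate_in_hom: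
  "is_iso C u \<Longrightarrow> u \<in> hom C a a' \<Longrightarrow> f \<in> hom C a b \<Longrightarrow> v \<in> hom C b b' \<Longrightarrow>
   conjugate C v u f \<in> hom C a' b'"
  unfolding conjugate_def by (intro comp_in_hom iso_inv_in_hom) assumption+

lemma conjugate_id:
  assumes "is_iso C v" "v \<in> hom C a b"
  shows "conjugate C v v (Id C a) = Id C b"
  using comp_id_left[OF iso_inv_in_hom[OF assms]] comp_iso_inv_right[OF assms]
  by (simp add: conjugate_def)

lemma iso_inv_comp_cancel:
  assumes "is_iso C v" "v \<in> hom C b b'" "h \<in> hom C x b"
  shows "Comp C (iso_inv C v) (Comp C v h) = h"
  using comp_assoc[OF assms(3,2) iso_inv_in_hom[OF assms(1,2)]]
    comp_iso_inv_left[OF assms(1,2)] comp_id_left[OF assms(3)] by simp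

lemma iso_inv_comp_conjugate:
  assumes "is_iso C u" "u \<in> hom C a a'" "f \<in> hom C a b" "is_iso C v" "v \<in> hom C b b'"
  shows "Comp C (iso_inv C v) (conjugate C v u f) = Comp C f (iso_inv C u)"
  unfolding conjugate_def
  by (rule iso_inv_comp_cancel[OF assms(4,5) comp_in_hom[OF iso_inv_in_hom[OF assms(1,2)] assms(3)]])

lemma conjugate_comp:
  assumes u: "is_iso C u" "u \<in> hom C a a'" and v: "is_iso C v" "v \<in> hom C b b'"
    and w: "w \<in> hom C c c'" and f: "f \<in> hom C a b" and g: "g \<in> hom C b c"
  shows "Comp C (conjugate C w v g) (conjugate C v u f) = conjugate C w u (Comp C g f)"
proof -
  note u' = iso_inv_in_hom[OF u] and v' = iso_inv_in_hom[OF v]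
  have fu: "Comp C f (iso_inv C u) \<in> hom C a' b" by (rule comp_in_hom[OF u' f])
  have "Comp C (Comp C g (iso_inv C v)) (Comp C v (Comp C f (iso_inv C u)))
      = Comp C (Comp C g f) (iso_inv C u)"
    using comp_assoc[OF comp_in_hom[OF fu v(2)] v' g] comp_assoc[OF u' f g]
      iso_inv_comp_cancel[OF v fu] by simp
  then show ?thesis
    unfolding conjugate_def
    using comp_assoc[OF comp_in_hom[OF fu v(2)] comp_in_hom[OF v' g] w] by simp
qed

lemma conjugate_comp_iso:
  assumes "is_iso C u" "u \<in> hom C a a'" "f \<in> hom C a b" "v \<in> hom C b b'"
  shows "Comp C (conjugate C v u f) u = Comp C v f"
proof -
  have "Comp C (Comp C f (iso_inv C u)) u = f"
    using comp_assoc[OF assms(2) iso_inv_in_hom[OF assms(1,2)] assms(3)]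
      comp_iso_inv_left[OF assms(1,2)] comp_id_right[OF assms(3)] by simp
  then show ?thesis
    unfolding conjugate_def
    using comp_assoc[OF assms(2) comp_in_hom[OF iso_inv_in_hom[OF assms(1,2)] assms(3)] assms(4)]
    by simp
qed

lemma conjugate_eqI:
  assumes "is_iso C u" "u \<in> hom C a a'" "f \<in> hom C a b" "v \<in> hom C b b'" "g \<in> hom C a' b'"
    and "Comp C v f = Comp C g u"
  shows "conjugate C v u f = g"
proof -
  note u' = iso_inv_in_hom[OF assms(1,2)]
  have "conjugate C v u f = Comp C (Comp C g u) (iso_inv C u)"
    unfolding conjugate_def using comp_assoc[OF u' assms(3,4)] assms(6) by simp
  also have "\<dots> = g"
    using comp_assoc[OF u' assms(2,5)] comp_iso_inv_right[OF assms(1,2)] comp_id_right[OF assms(5)]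
    by simp
  finally show ?thesis .
qed

end

definition transport_ar ::
  "('a, 'b) category \<Rightarrow> ('c, 'd) category \<Rightarrow> ('b \<Rightarrow> 'd) \<Rightarrow> ('a \<Rightarrow> 'd) \<Rightarrow> 'b \<Rightarrow> 'd" where
  "transport_ar A C Fa w f = conjugate C (w (Cod A f)) (w (Dom A f)) (Fa f)"

lemma transport_functor:
  assumes A: "category A" and C: "category C" and F: "is_functor A C Fo Fa"
    and w_hom: "\<And>a. a \<in> Ob A \<Longrightarrow> w a \<in> hom C (Fo a) (Go a)"
    and w_iso: "\<And>a. a \<in> Ob A \<Longrightarrow> is_iso C (w a)"
  shows "is_functor A C Go (transport_ar A C Fa w)"
    and "nat_iso A C Go (transport_ar A C Fa w) Fo Fa (\<lambda>a. iso_inv C (w a))"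
proof -
  interpret C: cat C by (rule cat.intro[OF C])
  let ?Ga = "transport_ar A C Fa w"
  have ends: "Dom A f \<in> Ob A" "Cod A f \<in> Ob A" if "f \<in> Ar A" for f
    using A that unfolding category_def by auto
  have Fa_hom: "Fa f \<in> hom C (Fo (Dom A f)) (Fo (Cod A f))" if "f \<in> Ar A" for f
    using F that unfolding is_functor_def by blast
  have Ga_hom: "?Ga f \<in> hom C (Go (Dom A f)) (Go (Cod A f))" if "f \<in> Ar A" for f
    unfolding transport_ar_def
    using C.conjugate_in_hom[OF w_iso w_hom Fa_hom w_hom] ends[OF that] that by blast
  show transported: "is_functor A C Go ?Ga"
    unfolding is_functor_def
  proof (intro conjI ballI impI)
    fix a assume a: "a \<in> Ob A"
    show "Go a \<in> Ob C" using C.hom_objects[OF w_hom[OF a]] by blast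
    have "Id A a \<in> hom A a a" using A a unfolding category_def by blast
    then have "Dom A (Id A a) = a" "Cod A (Id A a) = a" by (simp_all add: hom_def)
    moreover have "Fa (Id A a) = Id C (Fo a)" using F a unfolding is_functor_def by blast
    ultimately show "?Ga (Id A a) = Id C (Go a)"
      unfolding transport_ar_def using C.conjugate_id[OF w_iso w_hom, OF a a] by simp
  next
    fix f assume "f \<in> Ar A"
    then show "?Ga f \<in> hom C (Go (Dom A f)) (Go (Cod A f))" by (rule Ga_hom)
  next
    fix f g assume f: "f \<in> Ar A" and g: "g \<in> Ar A" and fg: "Cod A f = Dom A g"
    have "Comp A g f \<in> hom A (Dom A f) (Cod A g)" using A f g fg unfolding category_def by blast
    then have "Dom A (Comp A g f) = Dom A f" "Cod A (Comp A g f) = Cod A g" by (simp_all add: hom_def)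
    moreover have "Fa (Comp A g f) = Comp C (Fa g) (Fa f)" using F f g fg unfolding is_functor_def by blast
    ultimately show "?Ga (Comp A g f) = Comp C (?Ga g) (?Ga f)"
      unfolding transport_ar_def
      using C.conjugate_comp[OF w_iso w_hom w_iso w_hom w_hom Fa_hom[OF f] Fa_hom[OF g, folded fg]]
        ends f g by (simp add: fg)
  qed
  show "nat_iso A C Go ?Ga Fo Fa (\<lambda>a. iso_inv C (w a))"
    unfolding nat_iso_def
  proof (intro conjI ballI)
    fix a assume a: "a \<in> Ob A"
    show "iso_inv C (w a) \<in> hom C (Go a) (Fo a)" "is_iso C (iso_inv C (w a))"
      using iso_inv_in_hom[OF w_iso w_hom] iso_inv_is_iso[OF w_iso w_hom] a by blast+
  next
    fix f assume "f \<in> Ar A"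
    then show "Comp C (iso_inv C (w (Cod A f))) (?Ga f) = Comp C (Fa f) (iso_inv C (w (Dom A f)))"
      unfolding transport_ar_def
      using C.iso_inv_comp_conjugate[OF w_iso w_hom Fa_hom w_iso w_hom] ends by blast
  qed (fact transported F)+
qed

lemma fun_cat_simps [simp]:
  "Ob (fun_cat D n) = {F. diagram D n F}"
  "Ar (fun_cat D n) = {x. diag_arr D n x}"
  "Dom (fun_cat D n) (F, G, \<alpha>) = F"
  "Cod (fun_cat D n) (F, G, \<alpha>) = G"
  "Id (fun_cat D n) F = (F, F, \<lambda>i. if i \<le> n then Id D (vtx D F i) else undefined)"
  "Comp (fun_cat D n) (G, H, \<beta>) (F, G', \<alpha>) =
     (F, H, \<lambda>i. if i \<le> n then Comp D (\<beta> i) (\<alpha> i) else undefined)"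
  by (simp_all add: fun_cat_def)

lemma in_hom_fun_cat_iff:
  "x \<in> hom (fun_cat D n) F G \<longleftrightarrow> (\<exists>\<alpha>. x = (F, G, \<alpha>) \<and> diag_arr D n (F, G, \<alpha>))"
  by (cases x) (auto simp: hom_def)

context cat
begin

lemma diagram_in_hom: "diagram C n F \<Longrightarrow> i \<le> j \<Longrightarrow> j \<le> n \<Longrightarrow> F i j \<in> hom C (vtx C F i) (vtx C F j)"
  unfolding diagram_def by blast

lemma diag_arr_id:
  assumes F: "diagram C n F"
  shows "diag_arr C n (F, F, \<lambda>i. if i \<le> n then Id C (vtx C F i) else undefined)"
proof -
  have "Comp C (Id C (vtx C F j)) (F i j) = Comp C (F i j) (Id C (vtx C F i))"
    if "i \<le> j" "j \<le> n" for i j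
    using comp_id_left[OF diagram_in_hom[OF F that]] comp_id_right[OF diagram_in_hom[OF F that]]
    by simp
  then show ?thesis using F unfolding diag_arr_def diagram_def by (auto intro: id_in_hom)
qed

lemma diag_arr_comp:
  assumes \<alpha>: "diag_arr C n (F, G, \<alpha>)" and \<beta>: "diag_arr C n (G, H, \<beta>)"
  shows "diag_arr C n (F, H, \<lambda>i. if i \<le> n then Comp C (\<beta> i) (\<alpha> i) else undefined)"
proof -
  have F: "diagram C n F" and H: "diagram C n H" and G: "diagram C n G"
    and \<alpha>_hom: "\<And>i. i \<le> n \<Longrightarrow> \<alpha> i \<in> hom C (vtx C F i) (vtx C G i)"
    and \<beta>_hom: "\<And>i. i \<le> n \<Longrightarrow> \<beta> i \<in> hom C (vtx C G i) (vtx C H i)"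
    and \<alpha>_nat: "\<And>i j. i \<le> j \<Longrightarrow> j \<le> n \<Longrightarrow> Comp C (\<alpha> j) (F i j) = Comp C (G i j) (\<alpha> i)"
    and \<beta>_nat: "\<And>i j. i \<le> j \<Longrightarrow> j \<le> n \<Longrightarrow> Comp C (\<beta> j) (G i j) = Comp C (H i j) (\<beta> i)"
    using \<alpha> \<beta> unfolding diag_arr_def by auto
  have "Comp C (Comp C (\<beta> j) (\<alpha> j)) (F i j) = Comp C (H i j) (Comp C (\<beta> i) (\<alpha> i))"
    if ij: "i \<le> j" "j \<le> n" for i j
  proof -
    note hF = diagram_in_hom[OF F ij] and hG = diagram_in_hom[OF G ij]
      and hH = diagram_in_hom[OF H ij]
    have "Comp C (Comp C (\<beta> j) (\<alpha> j)) (F i j) = Comp C (\<beta> j) (Comp C (G i j) (\<alpha> i))"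
      using comp_assoc[OF hF \<alpha>_hom \<beta>_hom] \<alpha>_nat[OF ij] ij by simp
    also have "\<dots> = Comp C (Comp C (H i j) (\<beta> i)) (\<alpha> i)"
      using comp_assoc[OF \<alpha>_hom hG \<beta>_hom] \<beta>_nat[OF ij] ij by simp
    also have "\<dots> = Comp C (H i j) (Comp C (\<beta> i) (\<alpha> i))"
      using comp_assoc[OF \<alpha>_hom \<beta>_hom hH] ij by simp
    finally show ?thesis .
  qed
  then show ?thesis
    using F H comp_in_hom[OF \<alpha>_hom \<beta>_hom] unfolding diag_arr_def by auto
qed

lemma category_fun_cat: "category (fun_cat C n)"
  unfolding category_def
proof (intro conjI ballI impI)
  fix f assume "f \<in> Ar (fun_cat C n)"
  then show "Dom (fun_cat C n) f \<in> Ob (fun_cat C n)" "Cod (fun_cat C n) f \<in> Ob (fun_cat C n)"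
    by (cases f; simp add: diag_arr_def)+
next
  fix F assume "F \<in> Ob (fun_cat C n)"
  then show "Id (fun_cat C n) F \<in> hom (fun_cat C n) F F"
    using diag_arr_id by (simp add: in_hom_fun_cat_iff)
next
  fix f g assume "f \<in> Ar (fun_cat C n)" "g \<in> Ar (fun_cat C n)"
    "Cod (fun_cat C n) f = Dom (fun_cat C n) g"
  then show "Comp (fun_cat C n) g f \<in> hom (fun_cat C n) (Dom (fun_cat C n) f) (Cod (fun_cat C n) g)"
    using diag_arr_comp by (cases f, cases g) (auto simp: in_hom_fun_cat_iff)
next
  fix f assume "f \<in> Ar (fun_cat C n)"
  then obtain F G \<alpha> where f: "f = (F, G, \<alpha>)" "diag_arr C n (F, G, \<alpha>)" by (cases f) auto
  then have \<alpha>_hom: "\<And>i. i \<le> n \<Longrightarrow> \<alpha> i \<in> hom C (vtx C F i) (vtx C G i)"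
    and \<alpha>_undef: "\<And>i. n < i \<Longrightarrow> \<alpha> i = undefined"
    unfolding diag_arr_def by auto
  show "Comp (fun_cat C n) (Id (fun_cat C n) (Cod (fun_cat C n) f)) f = f"
    "Comp (fun_cat C n) f (Id (fun_cat C n) (Dom (fun_cat C n) f)) = f"
    using comp_id_left[OF \<alpha>_hom] comp_id_right[OF \<alpha>_hom] \<alpha>_undef
    by (auto simp: f intro!: ext)
next
  fix f g h assume "f \<in> Ar (fun_cat C n)" "g \<in> Ar (fun_cat C n)" "h \<in> Ar (fun_cat C n)"
    "Cod (fun_cat C n) f = Dom (fun_cat C n) g" "Cod (fun_cat C n) g = Dom (fun_cat C n) h"
  then obtain F G H K \<alpha> \<beta> \<gamma> where fgh: "f = (F, G, \<alpha>)" "g = (G, H, \<beta>)" "h = (H, K, \<gamma>)"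
    and "diag_arr C n (F, G, \<alpha>)" "diag_arr C n (G, H, \<beta>)" "diag_arr C n (H, K, \<gamma>)"
    by (cases f, cases g, cases h) auto
  then have "\<And>i. i \<le> n \<Longrightarrow>
      Comp C (\<gamma> i) (Comp C (\<beta> i) (\<alpha> i)) = Comp C (Comp C (\<gamma> i) (\<beta> i)) (\<alpha> i)"
    unfolding diag_arr_def by (auto intro: comp_assoc)
  then show "Comp (fun_cat C n) h (Comp (fun_cat C n) g f) = Comp (fun_cat C n) (Comp (fun_cat C n) h g) f"
    by (auto simp: fgh intro!: ext)
qed

lemma fun_cat_inverse:
  assumes \<alpha>: "diag_arr C n (F, G, \<alpha>)" and iso: "\<And>i. i \<le> n \<Longrightarrow> is_iso C (\<alpha> i)"
  defines "\<beta> \<equiv> \<lambda>i. if i \<le> n then iso_inv C (\<alpha> i) else undefined"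
  shows "diag_arr C n (G, F, \<beta>)"
    and "Comp (fun_cat C n) (G, F, \<beta>) (F, G, \<alpha>) = Id (fun_cat C n) F"
    and "Comp (fun_cat C n) (F, G, \<alpha>) (G, F, \<beta>) = Id (fun_cat C n) G"
proof -
  have F: "diagram C n F" and G: "diagram C n G"
    and \<alpha>_hom: "\<And>i. i \<le> n \<Longrightarrow> \<alpha> i \<in> hom C (vtx C F i) (vtx C G i)"
    and \<alpha>_nat: "\<And>i j. i \<le> j \<Longrightarrow> j \<le> n \<Longrightarrow> Comp C (\<alpha> j) (F i j) = Comp C (G i j) (\<alpha> i)"
    using \<alpha> unfolding diag_arr_def by auto
  have "Comp C (\<beta> j) (G i j) = Comp C (F i j) (\<beta> i)" if ij: "i \<le> j" "j \<le> n" for i j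
  proof -
    have "conjugate C (\<alpha> j) (\<alpha> i) (F i j) = G i j"
      using conjugate_eqI[OF iso \<alpha>_hom diagram_in_hom[OF F ij] \<alpha>_hom diagram_in_hom[OF G ij] \<alpha>_nat[OF ij]] ij
      by simp
    then show ?thesis
      using iso_inv_comp_conjugate[OF iso \<alpha>_hom diagram_in_hom[OF F ij] iso \<alpha>_hom] ij
      by (simp add: \<beta>_def)
  qed
  then show "diag_arr C n (G, F, \<beta>)"
    using F G iso_inv_in_hom[OF iso \<alpha>_hom] unfolding diag_arr_def \<beta>_def by auto
  show "Comp (fun_cat C n) (G, F, \<beta>) (F, G, \<alpha>) = Id (fun_cat C n) F"
    "Comp (fun_cat C n) (F, G, \<alpha>) (G, F, \<beta>) = Id (fun_cat C n) G"
    using comp_iso_inv_left[OF iso \<alpha>_hom] comp_iso_inv_right[OF iso \<alpha>_hom]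
    by (auto simp: \<beta>_def intro!: ext)
qed

lemma is_iso_fun_cat_iff:
  "is_iso (fun_cat C n) (F, G, \<alpha>) \<longleftrightarrow> diag_arr C n (F, G, \<alpha>) \<and> (\<forall>i\<le>n. is_iso C (\<alpha> i))"
proof
  assume iso: "is_iso (fun_cat C n) (F, G, \<alpha>)"
  then obtain \<beta> where \<alpha>: "diag_arr C n (F, G, \<alpha>)" and \<beta>: "diag_arr C n (G, F, \<beta>)"
    and left: "Comp (fun_cat C n) (G, F, \<beta>) (F, G, \<alpha>) = Id (fun_cat C n) F"
    and right: "Comp (fun_cat C n) (F, G, \<alpha>) (G, F, \<beta>) = Id (fun_cat C n) G"
    unfolding is_iso_def by (auto simp: in_hom_fun_cat_iff)
  have "is_iso C (\<alpha> i)" if i: "i \<le> n" for i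
  proof -
    have "Comp C (\<beta> i) (\<alpha> i) = Id C (vtx C F i)" "Comp C (\<alpha> i) (\<beta> i) = Id C (vtx C G i)"
      using fun_cong[OF left[simplified], of i] fun_cong[OF right[simplified], of i] i by auto
    moreover have "\<alpha> i \<in> hom C (vtx C F i) (vtx C G i)" "\<beta> i \<in> hom C (vtx C G i) (vtx C F i)"
      using \<alpha> \<beta> i unfolding diag_arr_def by auto
    ultimately show ?thesis unfolding is_iso_def hom_def by auto
  qed
  with \<alpha> show "diag_arr C n (F, G, \<alpha>) \<and> (\<forall>i\<le>n. is_iso C (\<alpha> i))" by blast
next
  assume "diag_arr C n (F, G, \<alpha>) \<and> (\<forall>i\<le>n. is_iso C (\<alpha> i))"
  then have \<alpha>: "diag_arr C n (F, G, \<alpha>)" and iso: "\<And>i. i \<le> n \<Longrightarrow> is_iso C (\<alpha> i)" by auto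
  note inverse = fun_cat_inverse[OF \<alpha> iso]
  show "is_iso (fun_cat C n) (F, G, \<alpha>)"
    unfolding is_iso_def
  proof (intro conjI bexI)
    show "(G, F, \<lambda>i. if i \<le> n then iso_inv C (\<alpha> i) else undefined)
        \<in> hom (fun_cat C n) (Cod (fun_cat C n) (F, G, \<alpha>)) (Dom (fun_cat C n) (F, G, \<alpha>))"
      using inverse(1) by (simp add: in_hom_fun_cat_iff)
  qed (use \<alpha> in simp, (simp only: fun_cat_simps(3,4) inverse(2,3))+)
qed

lemma iso_inv_fun_cat:
  assumes "is_iso (fun_cat C n) (F, G, \<alpha>)"
  shows "iso_inv (fun_cat C n) (F, G, \<alpha>) = (G, F, \<lambda>i. if i \<le> n then iso_inv C (\<alpha> i) else undefined)"
proof -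
  interpret FC: cat "fun_cat C n" by (rule cat.intro[OF category_fun_cat])
  have \<alpha>: "diag_arr C n (F, G, \<alpha>)" and "\<And>i. i \<le> n \<Longrightarrow> is_iso C (\<alpha> i)"
    using assms by (simp_all add: is_iso_fun_cat_iff)
  note inverse = fun_cat_inverse[OF this]
  show ?thesis
    by (rule FC.iso_inv_unique[OF assms _ _ inverse(2)]) (use \<alpha> inverse(1) in \<open>simp_all add: in_hom_fun_cat_iff\<close>)
qed

end

definition conjugate_diagram :: "('o, 'm) category \<Rightarrow> nat \<Rightarrow> (nat \<Rightarrow> 'm) \<Rightarrow> 'm diag \<Rightarrow> 'm diag" where
  "conjugate_diagram C n v S =
     (\<lambda>i j. if i \<le> j \<and> j \<le> n then conjugate C (v j) (v i) (S i j) else undefined)"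

lemma (in cat) conjugate_diagram:
  assumes S: "diagram C n S"
    and v_hom: "\<And>i. i \<le> n \<Longrightarrow> v i \<in> hom C (vtx C S i) (x i)"
    and v_iso: "\<And>i. i \<le> n \<Longrightarrow> is_iso C (v i)"
  shows vtx_conjugate_diagram: "\<And>i. i \<le> n \<Longrightarrow> vtx C (conjugate_diagram C n v S) i = x i"
    and diagram_conjugate_diagram: "diagram C n (conjugate_diagram C n v S)"
    and is_iso_to_conjugate_diagram:
      "is_iso (fun_cat C n) (S, conjugate_diagram C n v S, \<lambda>i. if i \<le> n then v i else undefined)"
proof -
  let ?T = "conjugate_diagram C n v S"
  have S_hom: "\<And>i j. i \<le> j \<Longrightarrow> j \<le> n \<Longrightarrow> S i j \<in> hom C (vtx C S i) (vtx C S j)"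
    and S_id: "\<And>i. i \<le> n \<Longrightarrow> S i i = Id C (vtx C S i)"
    and S_comp: "\<And>i j k. i \<le> j \<Longrightarrow> j \<le> k \<Longrightarrow> k \<le> n \<Longrightarrow> S i k = Comp C (S j k) (S i j)"
    using S unfolding diagram_def by auto
  have T_id: "?T i i = Id C (x i)" if "i \<le> n" for i
    using conjugate_id[OF v_iso v_hom] S_id that by (simp add: conjugate_diagram_def)
  have x_ob: "x i \<in> Ob C" if "i \<le> n" for i
    using hom_objects[OF v_hom[OF that]] by blast
  show vtx: "vtx C ?T i = x i" if "i \<le> n" for i
    using T_id[OF that] id_in_hom[OF x_ob[OF that]] by (simp add: vtx_def hom_def)
  have T_hom: "?T i j \<in> hom C (x i) (x j)" if "i \<le> j" "j \<le> n" for i j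
    using conjugate_in_hom[OF v_iso v_hom S_hom v_hom] that by (simp add: conjugate_diagram_def)
  show T: "diagram C n ?T"
    unfolding diagram_def
  proof (intro conjI allI impI)
    fix i j assume "i \<le> j \<and> j \<le> n"
    then show "?T i j \<in> hom C (vtx C ?T i) (vtx C ?T j)" using T_hom vtx by simp
  next
    fix i j :: nat assume "\<not> (i \<le> j \<and> j \<le> n)"
    then show "?T i j = undefined" unfolding conjugate_diagram_def by (simp only: if_False)
  next
    fix i assume "i \<le> n"
    then show "vtx C ?T i \<in> Ob C" "?T i i = Id C (vtx C ?T i)" using T_id vtx x_ob by simp_all
  next
    fix i j k :: nat assume ijk: "i \<le> j \<and> j \<le> k \<and> k \<le> n"
    then have "Comp C (?T j k) (?T i j) = conjugate C (v k) (v i) (Comp C (S j k) (S i j))"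
      using conjugate_comp[OF v_iso v_hom v_iso v_hom v_hom S_hom S_hom, of i j k]
      by (simp add: conjugate_diagram_def)
    with ijk show "?T i k = Comp C (?T j k) (?T i j)"
      using S_comp[of i j k] by (simp add: conjugate_diagram_def)
  qed
  have "diag_arr C n (S, ?T, \<lambda>i. if i \<le> n then v i else undefined)"
    unfolding diag_arr_def prod.case
  proof (intro conjI allI impI)
    fix i assume "i \<le> n"
    then show "(if i \<le> n then v i else undefined) \<in> hom C (vtx C S i) (vtx C ?T i)"
      using v_hom vtx by simp
  next
    fix i j :: nat assume ij: "i \<le> j \<and> j \<le> n"
    then show "Comp C (if j \<le> n then v j else undefined) (S i j)
        = Comp C (?T i j) (if i \<le> n then v i else undefined)"
      using conjugate_comp_iso[OF v_iso v_hom S_hom v_hom, of i j] by (simp add: conjugate_diagram_def)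
  qed (use S T in simp_all)
  then show "is_iso (fun_cat C n) (S, ?T, \<lambda>i. if i \<le> n then v i else undefined)"
    using v_iso by (simp add: is_iso_fun_cat_iff)
qed

lemma vtx_restr_ob [simp]:
  "vtx D (restr_ob F) 0 = vtx D F 0" "vtx D (restr_ob F) (Suc 0) = vtx D F 2"
  by (simp_all add: vtx_def restr_ob_def)

locale pseudo_factorization = cat D for D :: "('o, 'm) category" +
  fixes so :: "'m diag \<Rightarrow> 'm diag" and sa :: "'m diag_arr \<Rightarrow> 'm diag_arr"
    and \<theta> :: "'m diag \<Rightarrow> 'm diag_arr"
  assumes factorization_functor: "is_functor (fun_cat D 1) (fun_cat D 2) so sa"
    and unit_nat_iso:
      "nat_iso (fun_cat D 1) (fun_cat D 1) (restr_ob \<circ> so) (restr_ar \<circ> sa) (\<lambda>X. X) (\<lambda>f. f) \<theta>"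
begin

definition unit_comp :: "'m diag \<Rightarrow> nat \<Rightarrow> 'm" where
  "unit_comp X = snd (snd (\<theta> X))"

definition end_isos :: "'m diag \<Rightarrow> nat \<Rightarrow> 'm" where
  "end_isos X i =
     (if i = 0 then unit_comp X 0 else if i = 1 then Id D (vtx D (so X) 1) else unit_comp X 1)"

definition strict_ob :: "'m diag \<Rightarrow> 'm diag" where
  "strict_ob X = conjugate_diagram D 2 (end_isos X) (so X)"

definition to_strict :: "'m diag \<Rightarrow> 'm diag_arr" where
  "to_strict X = (so X, strict_ob X, \<lambda>i. if i \<le> 2 then end_isos X i else undefined)"

lemma diagram_so: "diagram D 1 X \<Longrightarrow> diagram D 2 (so X)"
  using factorization_functor unfolding is_functor_def by auto

lemma unit_at:
  assumes "diagram D 1 X"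
  shows "\<theta> X = (restr_ob (so X), X, unit_comp X)"
    and "diag_arr D 1 (restr_ob (so X), X, unit_comp X)"
    and "\<And>i. i \<le> 1 \<Longrightarrow> is_iso D (unit_comp X i)"
proof -
  have "\<theta> X \<in> hom (fun_cat D 1) (restr_ob (so X)) X" and iso: "is_iso (fun_cat D 1) (\<theta> X)"
    using unit_nat_iso assms unfolding nat_iso_def by auto
  then show \<theta>: "\<theta> X = (restr_ob (so X), X, unit_comp X)"
    and "diag_arr D 1 (restr_ob (so X), X, unit_comp X)"
    by (auto simp: in_hom_fun_cat_iff unit_comp_def)
  show "\<And>i. i \<le> 1 \<Longrightarrow> is_iso D (unit_comp X i)"
    using iso unfolding \<theta> by (simp add: is_iso_fun_cat_iff)
qed

lemma unit_comp_in_hom: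
  assumes "diagram D 1 X"
  shows "unit_comp X 0 \<in> hom D (vtx D (so X) 0) (vtx D X 0)"
    and "unit_comp X 1 \<in> hom D (vtx D (so X) 2) (vtx D X 1)"
proof -
  have "\<forall>i\<le>1. unit_comp X i \<in> hom D (vtx D (restr_ob (so X)) i) (vtx D X i)"
    using unit_at(2)[OF assms] unfolding diag_arr_def by simp
  from this[rule_format, of 0] this[rule_format, of 1]
  show "unit_comp X 0 \<in> hom D (vtx D (so X) 0) (vtx D X 0)"
    "unit_comp X 1 \<in> hom D (vtx D (so X) 2) (vtx D X 1)" by simp_all
qed

lemma unit_comp_natural:
  assumes f: "diag_arr D 1 (X, Y, \<phi>)" and sa_f: "sa (X, Y, \<phi>) = (so X, so Y, \<sigma>)"
  shows "Comp D (unit_comp Y 0) (\<sigma> 0) = Comp D (\<phi> 0) (unit_comp X 0)"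
    and "Comp D (unit_comp Y 1) (\<sigma> 2) = Comp D (\<phi> 1) (unit_comp X 1)"
proof -
  have "diagram D 1 X" "diagram D 1 Y" using f unfolding diag_arr_def by auto
  then have \<theta>: "\<theta> X = (restr_ob (so X), X, unit_comp X)" "\<theta> Y = (restr_ob (so Y), Y, unit_comp Y)"
    by (simp_all add: unit_at(1))
  have "Comp (fun_cat D 1) (\<theta> Y) (restr_ar (sa (X, Y, \<phi>))) = Comp (fun_cat D 1) (X, Y, \<phi>) (\<theta> X)"
    using unit_nat_iso f unfolding nat_iso_def by auto
  then have "snd (snd (Comp (fun_cat D 1) (\<theta> Y) (restr_ar (sa (X, Y, \<phi>))))) i
      = snd (snd (Comp (fun_cat D 1) (X, Y, \<phi>) (\<theta> X))) i" for i
    by simp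
  from this[of 0] this[of 1] show
    "Comp D (unit_comp Y 0) (\<sigma> 0) = Comp D (\<phi> 0) (unit_comp X 0)"
    "Comp D (unit_comp Y 1) (\<sigma> 2) = Comp D (\<phi> 1) (unit_comp X 1)"
    by (simp_all add: \<theta> sa_f restr_ar_def)
qed

lemma end_isos:
  assumes X: "diagram D 1 X" and i: "i \<le> 2"
  shows "end_isos X i \<in> hom D (vtx D (so X) i) (Cod D (end_isos X i))"
    and "is_iso D (end_isos X i)"
proof -
  have "vtx D (so X) 1 \<in> Ob D" using diagram_so[OF X] unfolding diagram_def by simp
  then have "end_isos X 1 \<in> hom D (vtx D (so X) 1) (vtx D (so X) 1)" "is_iso D (end_isos X 1)"
    using id_in_hom id_is_iso by (simp_all add: end_isos_def)
  moreover have "i = 0 \<or> i = 1 \<or> i = 2" using i by arith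
  ultimately show "end_isos X i \<in> hom D (vtx D (so X) i) (Cod D (end_isos X i))"
    "is_iso D (end_isos X i)"
    using unit_comp_in_hom[OF X] unit_at(3)[OF X] by (auto simp: end_isos_def hom_def)
qed

lemma strict_ob:
  assumes X: "diagram D 1 X"
  shows diagram_strict_ob: "diagram D 2 (strict_ob X)"
    and to_strict_in_hom: "to_strict X \<in> hom (fun_cat D 2) (so X) (strict_ob X)"
    and is_iso_to_strict: "is_iso (fun_cat D 2) (to_strict X)"
  using conjugate_diagram[OF diagram_so[OF X] end_isos[OF X]]
  unfolding strict_ob_def to_strict_def by (auto simp: in_hom_fun_cat_iff is_iso_fun_cat_iff)

lemma restr_strict_ob:
  assumes X: "diagram D 1 X"
  shows "restr_ob (strict_ob X) = X"
proof (intro ext)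
  fix i j :: nat
  note so_hom = diagram_in_hom[OF diagram_so[OF X]] and \<theta>_hom = unit_comp_in_hom[OF X]
  have so_id: "so X i i = Id D (vtx D (so X) i)" if "i \<le> 2" for i
    using diagram_so[OF X] that unfolding diagram_def by simp
  have X_id: "X i i = Id D (vtx D X i)" if "i \<le> 1" for i
    using X that unfolding diagram_def by simp
  have "\<forall>i j. i \<le> j \<and> j \<le> 1 \<longrightarrow>
      Comp D (unit_comp X j) (restr_ob (so X) i j) = Comp D (X i j) (unit_comp X i)"
    using unit_at(2)[OF X] unfolding diag_arr_def prod.case by blast
  from this[rule_format, of 0 1]
  have "Comp D (unit_comp X 1) (so X 0 2) = Comp D (X 0 1) (unit_comp X 0)"
    by (simp add: restr_ob_def)
  then have "strict_ob X 0 2 = X 0 1"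
    using conjugate_eqI[OF unit_at(3)[OF X] \<theta>_hom(1) so_hom \<theta>_hom(2) diagram_in_hom[OF X]]
    by (simp add: strict_ob_def conjugate_diagram_def end_isos_def)
  moreover have "strict_ob X 0 0 = X 0 0" "strict_ob X 2 2 = X 1 1"
    using conjugate_id[OF unit_at(3)[OF X] \<theta>_hom(1)] conjugate_id[OF unit_at(3)[OF X] \<theta>_hom(2)]
      so_id X_id by (simp_all add: strict_ob_def conjugate_diagram_def end_isos_def)
  moreover have "X i j = undefined" if "\<not> (i \<le> j \<and> j \<le> 1)"
    using X that unfolding diagram_def by simp
  ultimately show "restr_ob (strict_ob X) i j = X i j"
    unfolding restr_ob_def by (cases "i \<le> j \<and> j \<le> 1"; cases i; cases j) (auto simp: numeral_2_eq_2)
qed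

lemma restr_transport_ar:
  assumes f: "diag_arr D 1 (X, Y, \<phi>)"
  shows "restr_ar (transport_ar (fun_cat D 1) (fun_cat D 2) sa to_strict (X, Y, \<phi>)) = (X, Y, \<phi>)"
proof -
  have X: "diagram D 1 X" and Y: "diagram D 1 Y"
    and \<phi>_hom: "\<And>i. i \<le> 1 \<Longrightarrow> \<phi> i \<in> hom D (vtx D X i) (vtx D Y i)"
    and \<phi>_undef: "\<And>i. 1 < i \<Longrightarrow> \<phi> i = undefined"
    using f unfolding diag_arr_def by auto
  have "sa (X, Y, \<phi>) \<in> hom (fun_cat D 2) (so X) (so Y)"
    using factorization_functor f unfolding is_functor_def by auto
  then obtain \<sigma> where sa_f: "sa (X, Y, \<phi>) = (so X, so Y, \<sigma>)" and \<sigma>: "diag_arr D 2 (so X, so Y, \<sigma>)"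
    by (auto simp: in_hom_fun_cat_iff)
  have \<sigma>_hom: "\<And>i. i \<le> 2 \<Longrightarrow> \<sigma> i \<in> hom D (vtx D (so X) i) (vtx D (so Y) i)"
    using \<sigma> unfolding diag_arr_def by auto
  have "iso_inv (fun_cat D 2) (to_strict X)
      = (strict_ob X, so X, \<lambda>i. if i \<le> 2 then iso_inv D (end_isos X i) else undefined)"
    using iso_inv_fun_cat is_iso_to_strict[OF X] by (auto simp: to_strict_def intro!: ext)
  then have transport: "transport_ar (fun_cat D 1) (fun_cat D 2) sa to_strict (X, Y, \<phi>)
      = (strict_ob X, strict_ob Y,
         \<lambda>i. if i \<le> 2 then conjugate D (end_isos Y i) (end_isos X i) (\<sigma> i) else undefined)"
    by (auto simp: transport_ar_def conjugate_def sa_f to_strict_def)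
  note \<theta>X = unit_comp_in_hom[OF X] unit_at(3)[OF X] and \<theta>Y = unit_comp_in_hom[OF Y]
  have "conjugate D (end_isos Y 0) (end_isos X 0) (\<sigma> 0) = \<phi> 0"
    "conjugate D (end_isos Y 2) (end_isos X 2) (\<sigma> 2) = \<phi> 1"
    using conjugate_eqI[OF \<theta>X(3) \<theta>X(1) \<sigma>_hom \<theta>Y(1) \<phi>_hom unit_comp_natural(1)[OF f sa_f]]
      conjugate_eqI[OF \<theta>X(3) \<theta>X(2) \<sigma>_hom \<theta>Y(2) \<phi>_hom unit_comp_natural(2)[OF f sa_f]]
    by (simp_all add: end_isos_def)
  then have "(\<lambda>i. if i \<le> 1 then conjugate D (end_isos Y (2 * i)) (end_isos X (2 * i)) (\<sigma> (2 * i))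
      else undefined) = \<phi>"
    using \<phi>_undef by (intro ext) (auto simp: le_Suc_eq)
  then show ?thesis
    unfolding transport restr_ar_def by (auto simp: restr_strict_ob[OF X] restr_strict_ob[OF Y])
qed

end

theorem lemma5p5:
  fixes D :: "('o, 'm) category"
    and so :: "'m diag \<Rightarrow> 'm diag" and sa :: "'m diag_arr \<Rightarrow> 'm diag_arr"
  assumes "category D"
    and "pseudo_functorial_factorization D so sa"
  shows "\<exists>to ta \<eta>. functorial_factorization D to ta \<and>
           nat_iso (fun_cat D 1) (fun_cat D 2) to ta so sa \<eta>"
proof -
  obtain \<theta> where "pseudo_factorization D so sa \<theta>"
    using assms unfolding pseudo_functorial_factorization_def pseudo_factorization_def
      pseudo_factorization_axioms_def cat_def by blast
  then interpret pseudo_factorization D so sa \<theta> .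
  let ?ta = "transport_ar (fun_cat D 1) (fun_cat D 2) sa to_strict"
  have "is_functor (fun_cat D 1) (fun_cat D 2) strict_ob ?ta"
    and "nat_iso (fun_cat D 1) (fun_cat D 2) strict_ob ?ta so sa (\<lambda>X. iso_inv (fun_cat D 2) (to_strict X))"
    using transport_functor[OF category_fun_cat category_fun_cat factorization_functor
        to_strict_in_hom is_iso_to_strict] by simp_all
  moreover have "restr_ob (strict_ob X) = X" if "X \<in> Ob (fun_cat D 1)" for X
    using restr_strict_ob that by simp
  moreover have "restr_ar (?ta f) = f" if "f \<in> Ar (fun_cat D 1)" for f
    using restr_transport_ar that by (cases f) simp
  ultimately show ?thesis
    unfolding functorial_factorization_def by blast
qed

end
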